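(* Let $k>1$ and let $g_k:[0,+\infty)\to\mathbb{R}$ be $g_k(s)=\frac{s^2}{k+s^2}$. Then for every $\alpha>0$ there is a constant $c_\alpha>0$, independent of $\sigma$, such that for all $A,B\ge 0$, all $s\ge 0$ and all $\sigma>0$, $$A\cdot B\left[s\, g_k'\left((s-k)_+\right)\right]\le 2\sqrt2\,k\left[\alpha A^2 g_k\left((s-k)_+\right)+\alpha\sigma A^2+c_\alpha B^2\right].$$ Moreover, there exists a constant $c_k>0$, depending on $k$, such that $$s\,g_k'\left((s^2-k)_+\right)\le c_k\qquad\text{for all }s\ge 0.$$
   Context: $(\cdot)_+$ denotes the positive part; $g_k'$ is the derivative of $g_k$. *)

theory Defs
  imports "HOL-Analysis.Analysis"
begin

definition gk :: "real \<Rightarrow> real \<Rightarrow> real" where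
  "gk k s = s\<^sup>2 / (k + s\<^sup>2)"

definition pos_part :: "real \<Rightarrow> real" where
  "pos_part x = max x 0"

end

theory Submission
  imports Defs
begin

text \<open>Everything rests on the pointwise bound \<open>(s g\<^sub>k'(t))\<^sup>2 \<le> 8k g\<^sub>k(t)\<close> whenever
  \<open>|s| \<le> |t + k|\<close>, which follows from \<open>g\<^sub>k'(t) = 2kt/(k + t\<^sup>2)\<^sup>2\<close>, \<open>(t + k)\<^sup>2 \<le> 2k(k + t\<^sup>2)\<close>
  and \<open>k \<le> k + t\<^sup>2\<close>. For the first estimate \<open>s \<le> (s - k)\<^sub>+ + k\<close>, so with \<open>c\<^sub>\<alpha> = 1/(4k\<alpha>)\<close> the
  binary quadratic form \<open>2\<surd>2 k (\<alpha>A\<^sup>2g\<^sub>k + c\<^sub>\<alpha>B\<^sup>2) - AB s g\<^sub>k'\<close> is positive semidefinite. For the second, \<open>s\<^sup>2 \<le> (s\<^sup>2 - k)\<^sub>+ + k\<close> and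
  \<open>k > 1\<close> give \<open>s \<le> (s\<^sup>2 - k)\<^sub>+ + k\<close>, and \<open>g\<^sub>k < 1\<close> yields \<open>c\<^sub>k = \<surd>(8k)\<close>.\<close>

lemma quadratic_form_cross_term_le:
  fixes a b m x y :: real
  assumes "0 \<le> a" "0 \<le> b" "m\<^sup>2 \<le> a * b"
  shows "2 * m * x * y \<le> a * x\<^sup>2 + b * y\<^sup>2"
proof (cases "a = 0")
  case True
  with assms have "m = 0" by simp
  with assms show ?thesis by simp
next
  case False
  with assms have "0 < a" by simp
  have "a * (a * x\<^sup>2 + b * y\<^sup>2 - 2 * m * x * y) = (a * x - m * y)\<^sup>2 + (a * b - m\<^sup>2) * y\<^sup>2"
    by (simp add: power2_eq_square algebra_simps)
  also have "\<dots> \<ge> 0" using assms by simp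
  finally show ?thesis using \<open>0 < a\<close> by (simp add: zero_le_mult_iff)
qed

lemma gk_has_real_derivative:
  assumes "k > 0"
  shows "(gk k has_real_derivative 2 * k * t / (k + t\<^sup>2)\<^sup>2) (at t)"
proof -
  have "k + t\<^sup>2 \<noteq> 0" using assms add_pos_nonneg [of k "t\<^sup>2"] by simp
  then have "((\<lambda>x. x\<^sup>2 / (k + x\<^sup>2)) has_real_derivative
      (2 * t * (k + t\<^sup>2) - t\<^sup>2 * (2 * t)) / ((k + t\<^sup>2) * (k + t\<^sup>2))) (at t)"
    by (auto intro!: derivative_eq_intros)
  moreover have "(2 * t * (k + t\<^sup>2) - t\<^sup>2 * (2 * t)) / ((k + t\<^sup>2) * (k + t\<^sup>2))
      = 2 * k * t / (k + t\<^sup>2)\<^sup>2"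
    by (simp add: power2_eq_square algebra_simps)
  ultimately show ?thesis unfolding gk_def [abs_def] by simp
qed

lemma deriv_gk: "k > 0 \<Longrightarrow> deriv (gk k) t = 2 * k * t / (k + t\<^sup>2)\<^sup>2"
  by (rule DERIV_imp_deriv [OF gk_has_real_derivative])

lemma gk_nonneg: "k > 0 \<Longrightarrow> 0 \<le> gk k t"
  unfolding gk_def by (simp add: add_pos_nonneg)

lemma gk_less_one: "k > 0 \<Longrightarrow> gk k t < 1"
  unfolding gk_def by (simp add: add_pos_nonneg)

lemma shifted_square_le: "k \<ge> 1 \<Longrightarrow> (t + k)\<^sup>2 \<le> 2 * k * (k + t\<^sup>2)" for k t :: real
proof -
  assume "k \<ge> 1"
  have "(t + k)\<^sup>2 \<le> 2 * t\<^sup>2 + 2 * k\<^sup>2"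
    using zero_le_power2 [of "t - k"] by (simp add: power2_eq_square algebra_simps)
  moreover have "t\<^sup>2 \<le> k * t\<^sup>2" using mult_right_mono [of 1 k "t\<^sup>2"] \<open>k \<ge> 1\<close> by simp
  ultimately show ?thesis by (simp add: algebra_simps power2_eq_square)
qed

lemma scaled_deriv_gk_square_le:
  fixes k s t :: real
  assumes k: "k \<ge> 1" and s: "s\<^sup>2 \<le> (t + k)\<^sup>2"
  shows "(s * deriv (gk k) t)\<^sup>2 \<le> 8 * k * gk k t"
proof -
  define q where "q = k + t\<^sup>2"
  have "k \<le> q" "0 < q" using k by (auto simp: q_def add_pos_nonneg)
  have "(s * deriv (gk k) t)\<^sup>2 = 4 * k\<^sup>2 * t\<^sup>2 * s\<^sup>2 / q ^ 4"
    using k by (simp add: deriv_gk q_def power_mult_distrib power_divide flip: power_mult)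
  also have "\<dots> \<le> 4 * k\<^sup>2 * t\<^sup>2 * (2 * k * q) / q ^ 4"
    using s shifted_square_le [OF k, of t] by (intro divide_right_mono mult_left_mono)
      (auto simp: q_def)
  also have "\<dots> = 8 * k * (t\<^sup>2 / q) * (k\<^sup>2 / q\<^sup>2)"
    using \<open>0 < q\<close> by (simp add: field_simps eval_nat_numeral)
  also have "\<dots> \<le> 8 * k * (t\<^sup>2 / q)"
    using k \<open>k \<le> q\<close> \<open>0 < q\<close>
    by (intro mult_left_le) (auto simp: power_mono divide_le_eq_1)
  finally show ?thesis by (simp add: gk_def q_def)
qed

lemma cross_term_le_gk:
  fixes k \<alpha> \<sigma> A B s :: real
  assumes "k > 1" "\<alpha> > 0" "\<sigma> > 0" "s \<ge> 0"
  defines "t \<equiv> pos_part (s - k)" and "D \<equiv> 2 * sqrt 2 * k" and "c \<equiv> 1 / (4 * k * \<alpha>)"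
  shows "A * B * (s * deriv (gk k) t) \<le> D * (\<alpha> * A\<^sup>2 * gk k t + \<alpha> * \<sigma> * A\<^sup>2 + c * B\<^sup>2)"
proof -
  have "s\<^sup>2 \<le> (t + k)\<^sup>2" using \<open>s \<ge> 0\<close> by (intro power_mono) (auto simp: t_def pos_part_def)
  then have "(s * deriv (gk k) t)\<^sup>2 \<le> 8 * k * gk k t"
    using assms by (intro scaled_deriv_gk_square_le) auto
  also have "8 * k * gk k t = (2 * D * \<alpha> * gk k t) * (2 * D * c)"
    using assms by (simp add: c_def D_def field_simps power2_eq_square)
  finally have "2 * (s * deriv (gk k) t) * A * B \<le> (2 * D * \<alpha> * gk k t) * A\<^sup>2 + (2 * D * c) * B\<^sup>2"
    using assms gk_nonneg [of k t] by (intro quadratic_form_cross_term_le) auto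
  then have "A * B * (s * deriv (gk k) t) \<le> D * (\<alpha> * A\<^sup>2 * gk k t + c * B\<^sup>2)"
    by (simp add: algebra_simps)
  also have "\<dots> \<le> D * (\<alpha> * A\<^sup>2 * gk k t + \<alpha> * \<sigma> * A\<^sup>2 + c * B\<^sup>2)"
    using assms by (intro mult_left_mono) auto
  finally show ?thesis .
qed

lemma scaled_deriv_gk_le_sqrt:
  fixes k s :: real
  assumes "k > 1"
  shows "s * deriv (gk k) (pos_part (s\<^sup>2 - k)) \<le> sqrt (8 * k)"
proof -
  define t where "t = pos_part (s\<^sup>2 - k)"
  have "s\<^sup>2 \<le> t + k" "1 \<le> t + k" using assms by (auto simp: t_def pos_part_def)
  then have "s\<^sup>2 \<le> (t + k)\<^sup>2" using self_le_power [of "t + k" 2] by simp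
  then have "(s * deriv (gk k) t)\<^sup>2 \<le> 8 * k * gk k t"
    using assms by (intro scaled_deriv_gk_square_le) auto
  also have "\<dots> \<le> 8 * k" using assms gk_less_one [of k t] by simp
  finally show ?thesis unfolding t_def by (rule real_le_rsqrt)
qed

theorem mainTheorem3:
  fixes k :: real
  assumes "k > 1"
  shows "(\<forall>\<alpha>>0. \<exists>c>0. \<forall>A B s \<sigma> :: real. A \<ge> 0 \<longrightarrow> B \<ge> 0 \<longrightarrow> s \<ge> 0 \<longrightarrow> \<sigma> > 0 \<longrightarrow>
            A * B * (s * deriv (gk k) (pos_part (s - k)))
              \<le> 2 * sqrt 2 * k * (\<alpha> * A\<^sup>2 * gk k (pos_part (s - k)) + \<alpha> * \<sigma> * A\<^sup>2 + c * B\<^sup>2))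
       \<and> (\<exists>c>0. \<forall>s::real. s \<ge> 0 \<longrightarrow> s * deriv (gk k) (pos_part (s\<^sup>2 - k)) \<le> c)"
proof (intro conjI allI impI)
  fix \<alpha> :: real
  assume "\<alpha> > 0"
  show "\<exists>c>0. \<forall>A B s \<sigma> :: real. A \<ge> 0 \<longrightarrow> B \<ge> 0 \<longrightarrow> s \<ge> 0 \<longrightarrow> \<sigma> > 0 \<longrightarrow>
            A * B * (s * deriv (gk k) (pos_part (s - k)))
              \<le> 2 * sqrt 2 * k * (\<alpha> * A\<^sup>2 * gk k (pos_part (s - k)) + \<alpha> * \<sigma> * A\<^sup>2 + c * B\<^sup>2)"
    using cross_term_le_gk [OF assms \<open>\<alpha> > 0\<close>] assms \<open>\<alpha> > 0\<close>
    by (intro exI [of _ "1 / (4 * k * \<alpha>)"]) auto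
next
  show "\<exists>c>0. \<forall>s::real. s \<ge> 0 \<longrightarrow> s * deriv (gk k) (pos_part (s\<^sup>2 - k)) \<le> c"
    using scaled_deriv_gk_le_sqrt [OF assms] assms by (intro exI [of _ "sqrt (8 * k)"]) auto
qed

end
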